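(* Let $V=\{0,1\}^n$ with uniform measure $\mu$. For any partition $(A,B,W)$ of $V$ there is another partition $(A',B',W')$ of $V$ such that: (1) $\mu(A')=\mu(A)$, $\mu(B')=\mu(B)$, $\mu(W')=\mu(W)$; (2) $A'$ is increasing and $B'$ is decreasing; (3) $|\nabla_i(A,B)|\ge|\nabla_i(A',B')|$ for all $i\in[n]$.
   Context: $V$ carries the coordinatewise product order. $A\subseteq V$ is increasing if $x\in A$ and $y\ge x$ imply $y\in A$; decreasing is defined analogously with $y\le x$. For $x\in V$, $x^i$ is $x$ with coordinate $i$ flipped, and $\nabla_i(A,B)=\{(x,x^i): x\in A,\ x^i\in B\}$. *)

theory Defs
  imports Complex_Main
begin

text \<open>The discrete cube V = {0,1}^n: points are maps nat => bool, coordinates 0..n-1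
  (coordinate i corresponds to index i+1 of [n]); all coordinates >= n are False.\<close>
definition cube :: "nat \<Rightarrow> (nat \<Rightarrow> bool) set" where
  "cube n = {x. \<forall>i\<ge>n. \<not> x i}"

definition mu :: "nat \<Rightarrow> (nat \<Rightarrow> bool) set \<Rightarrow> real" where
  "mu n A = real (card (A \<inter> cube n)) / 2 ^ n"

definition cube_le :: "nat \<Rightarrow> (nat \<Rightarrow> bool) \<Rightarrow> (nat \<Rightarrow> bool) \<Rightarrow> bool" where
  "cube_le n x y \<longleftrightarrow> (\<forall>i<n. x i \<longrightarrow> y i)"

definition increasing :: "nat \<Rightarrow> (nat \<Rightarrow> bool) set \<Rightarrow> bool" where
  "increasing n A \<longleftrightarrow> (\<forall>x\<in>A. \<forall>y\<in>cube n. cube_le n x y \<longrightarrow> y \<in> A)"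

definition decreasing :: "nat \<Rightarrow> (nat \<Rightarrow> bool) set \<Rightarrow> bool" where
  "decreasing n A \<longleftrightarrow> (\<forall>x\<in>A. \<forall>y\<in>cube n. cube_le n y x \<longrightarrow> y \<in> A)"

definition flip :: "nat \<Rightarrow> (nat \<Rightarrow> bool) \<Rightarrow> (nat \<Rightarrow> bool)" where
  "flip i x = x(i := \<not> x i)"

definition edge_boundary :: "nat \<Rightarrow> (nat \<Rightarrow> bool) set \<Rightarrow> (nat \<Rightarrow> bool) set
    \<Rightarrow> ((nat \<Rightarrow> bool) \<times> (nat \<Rightarrow> bool)) set" where
  "edge_boundary i A B = {(x, flip i x) | x. x \<in> A \<and> flip i x \<in> B}"

definition is_partition3 :: "nat \<Rightarrow> (nat \<Rightarrow> bool) set \<Rightarrow> (nat \<Rightarrow> bool) set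
    \<Rightarrow> (nat \<Rightarrow> bool) set \<Rightarrow> bool" where
  "is_partition3 n A B W \<longleftrightarrow> A \<union> B \<union> W = cube n \<and> A \<inter> B = {} \<and> A \<inter> W = {} \<and> B \<inter> W = {}"

end

theory Submission
  imports Defs
begin

text \<open>Encode the partition by the labelling f = 2 on A, 1 on W, 0 on B and sort f along
  each coordinate in turn: compression in direction i puts the minimum of the two values of
  every i-edge at its lower end and the maximum at its upper end. This permutes the cube, so
  level sets keep their sizes and the number of 2-0 edges in direction i is unchanged. For
  another direction j the cube splits into squares spanned by i and j, and sorting the two
  parallel i-edges of a square cannot create 2-0 edges in direction j. Compression also
  preserves monotonicity in the directions already sorted, so after all n compressions the
  labelling is monotone: its top level set is increasing and its bottom level set decreasing.\<close>

lemma flip_flip [simp]: "flip i (flip i x) = x"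
  by (auto simp: flip_def)

lemma flip_same [simp]: "flip i x i = (\<not> x i)"
  by (simp add: flip_def)

lemma flip_other: "k \<noteq> i \<Longrightarrow> flip i x k = x k"
  by (simp add: flip_def)

lemma flip_commute: "flip i (flip j x) = flip j (flip i x)"
  by (auto simp: flip_def fun_eq_iff)

lemma flip_in_cube_iff: "i < n \<Longrightarrow> flip i x \<in> cube n \<longleftrightarrow> x \<in> cube n"
  by (auto simp: cube_def flip_def)

lemma finite_cube: "finite (cube n)"
proof -
  have "cube n \<subseteq> (\<lambda>S i. i \<in> S) ` Pow {..<n}"
  proof
    fix x assume "x \<in> cube n"
    hence "{i. x i} \<in> Pow {..<n}" by (auto simp: cube_def not_le[symmetric])
    moreover have "x = (\<lambda>i. i \<in> {i. x i})" by simp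
    ultimately show "x \<in> (\<lambda>S i. i \<in> S) ` Pow {..<n}" by blast
  qed
  thus ?thesis by (rule finite_subset) simp
qed

lemma sum_flip_pairs:
  assumes "finite S" and closed: "\<And>x. x \<in> S \<Longrightarrow> flip i x \<in> S"
  shows "sum g S = (\<Sum>x\<in>{x\<in>S. \<not> x i}. g x + g (flip i x))"
proof -
  let ?L = "{x\<in>S. \<not> x i}"
  have split: "S = ?L \<union> flip i ` ?L"
  proof (intro equalityI subsetI)
    fix x assume "x \<in> S"
    show "x \<in> ?L \<union> flip i ` ?L"
    proof (cases "x i")
      case True
      hence "flip i x \<in> ?L"
        using closed[OF \<open>x \<in> S\<close>] by simp
      hence "flip i (flip i x) \<in> flip i ` ?L"
        by (rule imageI)
      thus ?thesis by simp
    next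
      case False
      thus ?thesis using \<open>x \<in> S\<close> by simp
    qed
  next
    fix x assume "x \<in> ?L \<union> flip i ` ?L"
    thus "x \<in> S" using closed by auto
  qed
  have "inj_on (flip i) ?L"
    by (rule inj_on_inverseI[of _ "flip i"]) simp
  moreover have "?L \<inter> flip i ` ?L = {}"
    by auto
  ultimately have "sum g S = sum g ?L + sum (g \<circ> flip i) ?L"
    using \<open>finite S\<close> by (subst split) (simp add: sum.union_disjoint sum.reindex)
  thus ?thesis
    by (simp add: sum.distrib)
qed

lemma card_edge_boundary_levels:
  assumes "j < n"
  shows "card (edge_boundary j {x\<in>cube n. f x = a} {x\<in>cube n. f x = b})
       = card {x\<in>cube n. f x = a \<and> f (flip j x) = b}"
proof -
  have "edge_boundary j {x\<in>cube n. f x = a} {x\<in>cube n. f x = b}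
      = (\<lambda>x. (x, flip j x)) ` {x\<in>cube n. f x = a \<and> f (flip j x) = b}"
    using assms by (auto simp: edge_boundary_def flip_in_cube_iff)
  moreover have "inj (\<lambda>x. (x, flip j x))"
    by (auto intro: injI)
  ultimately show ?thesis
    by (simp add: card_image inj_on_subset)
qed

lemma sorted_square_edges:
  fixes a b c d lo hi :: "'a::linorder"
  assumes "lo \<le> a" "lo \<le> b" "lo \<le> c" "lo \<le> d" "a \<le> hi" "b \<le> hi" "c \<le> hi" "d \<le> hi"
  shows "of_bool (min a b = hi \<and> min c d = lo) + of_bool (min c d = hi \<and> min a b = lo)
       + (of_bool (max a b = hi \<and> max c d = lo) + of_bool (max c d = hi \<and> max a b = lo))
     \<le> (of_bool (a = hi \<and> c = lo) + of_bool (c = hi \<and> a = lo)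
       + (of_bool (b = hi \<and> d = lo) + of_bool (d = hi \<and> b = lo)) :: nat)"
proof (cases "a \<le> b"; cases "c \<le> d")
  assume "a \<le> b" "c \<le> d"
  thus ?thesis by simp
next
  assume "\<not> a \<le> b" "\<not> c \<le> d"
  thus ?thesis by (simp add: min_def max_def)
next
  assume "a \<le> b" "\<not> c \<le> d"
  hence "d \<noteq> hi" "c \<noteq> lo" "a = hi \<Longrightarrow> b = hi" "b = lo \<Longrightarrow> a = lo"
    using assms by auto
  with \<open>a \<le> b\<close> \<open>\<not> c \<le> d\<close> show ?thesis
    by (auto simp: min_def max_def)
next
  assume "\<not> a \<le> b" "c \<le> d"
  hence "b \<noteq> hi" "a \<noteq> lo" "c = hi \<Longrightarrow> d = hi" "d = lo \<Longrightarrow> c = lo"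
    using assms by auto
  with \<open>\<not> a \<le> b\<close> \<open>c \<le> d\<close> show ?thesis
    by (auto simp: min_def max_def)
qed

definition compress :: "nat \<Rightarrow> ((nat \<Rightarrow> bool) \<Rightarrow> 'a::linorder) \<Rightarrow> (nat \<Rightarrow> bool) \<Rightarrow> 'a" where
  "compress i f x = (if x i then max (f x) (f (flip i x)) else min (f x) (f (flip i x)))"

definition compress_perm :: "nat \<Rightarrow> ((nat \<Rightarrow> bool) \<Rightarrow> 'a::linorder) \<Rightarrow> (nat \<Rightarrow> bool) \<Rightarrow> nat \<Rightarrow> bool"
  where "compress_perm i f x =
    (if (if x i then f x < f (flip i x) else f (flip i x) < f x) then flip i x else x)"

lemma compress_eq_perm: "compress i f x = f (compress_perm i f x)"
  by (auto simp: compress_def compress_perm_def)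

lemma compress_perm_flip: "compress_perm i f (flip i x) = flip i (compress_perm i f x)"
  by (auto simp: compress_perm_def)

lemma compress_perm_compress_perm [simp]: "compress_perm i f (compress_perm i f x) = x"
  by (auto simp: compress_perm_def)

lemma compress_perm_in_cube_iff: "i < n \<Longrightarrow> compress_perm i f x \<in> cube n \<longleftrightarrow> x \<in> cube n"
  by (auto simp: compress_perm_def flip_in_cube_iff)

lemma inj_compress_perm: "inj (compress_perm i f)"
  by (metis injI compress_perm_compress_perm)

lemma compress_in_range: "compress i f x \<in> range f"
  by (simp add: compress_eq_perm)

lemma card_compress_preimage:
  assumes "i < n"
  shows "card {x\<in>cube n. P (compress i f x)} = card {x\<in>cube n. P (f x)}"
proof -
  have "{x\<in>cube n. P (compress i f x)} = compress_perm i f ` {x\<in>cube n. P (f x)}"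
    using assms by (auto simp: compress_eq_perm compress_perm_in_cube_iff image_iff
        intro!: exI[of _ "compress_perm i f _"])
  thus ?thesis
    by (simp add: card_image inj_on_subset[OF inj_compress_perm])
qed

lemma card_edges_compress_same:
  assumes "i < n"
  shows "card {x\<in>cube n. compress i f x = a \<and> compress i f (flip i x) = b}
       = card {x\<in>cube n. f x = a \<and> f (flip i x) = b}"
proof -
  have "{x\<in>cube n. compress i f x = a \<and> compress i f (flip i x) = b}
      = compress_perm i f ` {x\<in>cube n. f x = a \<and> f (flip i x) = b}"
    using assms by (auto simp: compress_eq_perm compress_perm_flip compress_perm_in_cube_iff
        image_iff intro!: exI[of _ "compress_perm i f _"])
  thus ?thesis
    by (simp add: card_image inj_on_subset[OF inj_compress_perm])
qed

lemma card_edges_eq_sum_squares: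
  fixes g :: "(nat \<Rightarrow> bool) \<Rightarrow> 'a" and a b :: 'a
  assumes "i \<noteq> j" "i < n" "j < n"
  defines "E \<equiv> \<lambda>x. of_bool (g x = a \<and> g (flip j x) = b) + of_bool (g (flip j x) = a \<and> g x = b) :: nat"
  shows "card {x\<in>cube n. g x = a \<and> g (flip j x) = b}
       = (\<Sum>x\<in>{x\<in>{x\<in>cube n. \<not> x j}. \<not> x i}. E x + E (flip i x))"
proof -
  have "card {x\<in>cube n. g x = a \<and> g (flip j x) = b}
      = (\<Sum>x\<in>cube n. of_bool (g x = a \<and> g (flip j x) = b) :: nat)"
    by (simp add: sum_of_bool_eq finite_cube Collect_conj_eq)
  also have "\<dots> = (\<Sum>x\<in>{x\<in>cube n. \<not> x j}. E x)"
    unfolding E_def using assms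
    by (subst sum_flip_pairs[where S="cube n" and i=j]) (simp_all add: finite_cube flip_in_cube_iff)
  also have "\<dots> = (\<Sum>x\<in>{x\<in>{x\<in>cube n. \<not> x j}. \<not> x i}. E x + E (flip i x))"
    using assms by (intro sum_flip_pairs) (auto simp: finite_cube flip_in_cube_iff flip_other)
  finally show ?thesis .
qed

lemma card_edges_compress_other:
  assumes "i \<noteq> j" "i < n" "j < n" and bounds: "\<And>x. lo \<le> f x \<and> f x \<le> hi"
  shows "card {x\<in>cube n. compress i f x = hi \<and> compress i f (flip j x) = lo}
       \<le> card {x\<in>cube n. f x = hi \<and> f (flip j x) = lo}"
  unfolding card_edges_eq_sum_squares[OF assms(1-3)]
proof (rule sum_mono)
  fix x assume "x \<in> {x\<in>{x\<in>cube n. \<not> x j}. \<not> x i}"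
  hence "\<not> x i" "\<not> flip j x i"
    using assms(1) by (simp_all add: flip_other)
  hence compressed: "compress i f x = min (f x) (f (flip i x))"
    "compress i f (flip i x) = max (f x) (f (flip i x))"
    "compress i f (flip j x) = min (f (flip j x)) (f (flip i (flip j x)))"
    "compress i f (flip i (flip j x)) = max (f (flip j x)) (f (flip i (flip j x)))"
    by (simp_all add: compress_def flip_commute[of j i] max.commute)
  show "of_bool (compress i f x = hi \<and> compress i f (flip j x) = lo)
        + of_bool (compress i f (flip j x) = hi \<and> compress i f x = lo)
      + (of_bool (compress i f (flip i x) = hi \<and> compress i f (flip j (flip i x)) = lo)
        + of_bool (compress i f (flip j (flip i x)) = hi \<and> compress i f (flip i x) = lo))
    \<le> (of_bool (f x = hi \<and> f (flip j x) = lo) + of_bool (f (flip j x) = hi \<and> f x = lo)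
      + (of_bool (f (flip i x) = hi \<and> f (flip j (flip i x)) = lo)
        + of_bool (f (flip j (flip i x)) = hi \<and> f (flip i x) = lo)) :: nat)"
    unfolding compressed flip_commute[of j i]
    by (intro sorted_square_edges) (simp_all add: bounds)
qed

definition monotone_in :: "nat \<Rightarrow> ((nat \<Rightarrow> bool) \<Rightarrow> 'a::order) \<Rightarrow> bool" where
  "monotone_in i f \<longleftrightarrow> (\<forall>x. \<not> x i \<longrightarrow> f x \<le> f (flip i x))"

lemma monotone_in_compress: "monotone_in i (compress i f)"
  by (simp add: monotone_in_def compress_def max.commute min.coboundedI1)

lemma monotone_in_compress_other:
  assumes "monotone_in k f" "k \<noteq> i"
  shows "monotone_in k (compress i f)"
  unfolding monotone_in_def
proof (intro allI impI)
  fix x assume "\<not> x k"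
  have mono: "\<not> y k \<Longrightarrow> f y \<le> f (flip k y)" for y
    using assms(1) unfolding monotone_in_def by blast
  have "f x \<le> f (flip k x)" "f (flip i x) \<le> f (flip i (flip k x))"
    using mono[of x] mono[of "flip i x"] \<open>\<not> x k\<close> assms(2)
    by (simp_all add: flip_other flip_commute[of k i])
  moreover have "flip k x i = x i"
    using assms(2) by (simp add: flip_other)
  ultimately show "compress i f x \<le> compress i f (flip k x)"
    by (cases "x i") (simp_all only: compress_def if_True if_False min.mono max.mono)
qed

lemma monotone_on_cube:
  assumes mono: "\<And>k. k < n \<Longrightarrow> monotone_in k f"
    and "x \<in> cube n" "y \<in> cube n" "cube_le n x y"
  shows "f x \<le> f y"
proof -
  define z where "z k = (\<lambda>t. if t < k then y t else x t)" for k
  have "f x \<le> f (z k)" for k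
  proof (induction k)
    case 0
    thus ?case by (simp add: z_def)
  next
    case (Suc k)
    show ?case
    proof (cases "x k = y k")
      case True
      hence "z (Suc k) = z k"
        by (auto simp: z_def fun_eq_iff less_Suc_eq)
      thus ?thesis using Suc by simp
    next
      case False
      hence "k < n"
        using assms(2,3) by (auto simp: cube_def not_less[symmetric])
      hence "\<not> x k" "y k"
        using False assms(4) by (auto simp: cube_le_def)
      hence "z (Suc k) = flip k (z k)" "\<not> z k k"
        by (auto simp: z_def fun_eq_iff flip_def)
      hence "f (z k) \<le> f (z (Suc k))"
        using mono[OF \<open>k < n\<close>] by (simp add: monotone_in_def)
      thus ?thesis using Suc by simp
    qed
  qed
  moreover have "z n = y"
    using assms(2,3) by (auto simp: z_def fun_eq_iff cube_def)
  ultimately show ?thesis by metis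
qed

lemma increasing_top_level:
  assumes "\<And>k. k < n \<Longrightarrow> monotone_in k f" and top: "\<And>x. f x \<le> hi"
  shows "increasing n {x\<in>cube n. f x = hi}"
  unfolding increasing_def
proof (intro ballI impI)
  fix x y assume "x \<in> {x\<in>cube n. f x = hi}" "y \<in> cube n" "cube_le n x y"
  hence "hi \<le> f y"
    using monotone_on_cube[OF assms(1)] by fastforce
  thus "y \<in> {x\<in>cube n. f x = hi}"
    using top[of y] \<open>y \<in> cube n\<close> by simp
qed

lemma decreasing_bottom_level:
  assumes "\<And>k. k < n \<Longrightarrow> monotone_in k f" and bottom: "\<And>x. lo \<le> f x"
  shows "decreasing n {x\<in>cube n. f x = lo}"
  unfolding decreasing_def
proof (intro ballI impI)
  fix x y assume "x \<in> {x\<in>cube n. f x = lo}" "y \<in> cube n" "cube_le n y x"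
  hence "f y \<le> lo"
    using monotone_on_cube[OF assms(1)] by fastforce
  thus "y \<in> {x\<in>cube n. f x = lo}"
    using bottom[of y] \<open>y \<in> cube n\<close> by simp
qed

primrec compress_upto :: "((nat \<Rightarrow> bool) \<Rightarrow> 'a::linorder) \<Rightarrow> nat \<Rightarrow> (nat \<Rightarrow> bool) \<Rightarrow> 'a" where
  "compress_upto f 0 = f"
| "compress_upto f (Suc k) = compress k (compress_upto f k)"

lemma compress_upto_in_range: "compress_upto f k x \<in> range f"
proof (induction k arbitrary: x)
  case (Suc k)
  thus ?case using compress_in_range[of k "compress_upto f k" x] by auto
qed simp

lemma card_compress_upto_preimage:
  "k \<le> n \<Longrightarrow> card {x\<in>cube n. P (compress_upto f k x)} = card {x\<in>cube n. P (f x)}"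
  by (induction k) (simp_all add: card_compress_preimage)

lemma card_edges_compress_upto:
  assumes "k \<le> n" "j < n" and bounds: "\<And>x. lo \<le> f x \<and> f x \<le> hi"
  shows "card {x\<in>cube n. compress_upto f k x = hi \<and> compress_upto f k (flip j x) = lo}
       \<le> card {x\<in>cube n. f x = hi \<and> f (flip j x) = lo}"
  using assms(1)
proof (induction k)
  case (Suc k)
  let ?g = "compress_upto f k"
  have "k < n"
    using Suc.prems by simp
  have "card {x\<in>cube n. compress k ?g x = hi \<and> compress k ?g (flip j x) = lo}
      \<le> card {x\<in>cube n. ?g x = hi \<and> ?g (flip j x) = lo}"
  proof (cases "k = j")
    case True
    show ?thesis
      using card_edges_compress_same[OF \<open>k < n\<close>, of ?g hi lo] unfolding True by (rule eq_imp_le)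
  next
    case False
    have "lo \<le> ?g x \<and> ?g x \<le> hi" for x
    proof -
      obtain y where "?g x = f y"
        using compress_upto_in_range[of f k x] by blast
      thus ?thesis using bounds[of y] by simp
    qed
    with False \<open>k < n\<close> \<open>j < n\<close> show ?thesis
      by (rule card_edges_compress_other)
  qed
  also have "\<dots> \<le> card {x\<in>cube n. f x = hi \<and> f (flip j x) = lo}"
    using Suc.IH \<open>k < n\<close> by simp
  finally show ?case
    by simp
qed simp

lemma monotone_in_compress_upto: "i < k \<Longrightarrow> monotone_in i (compress_upto f k)"
proof (induction k)
  case (Suc k)
  show ?case
  proof (cases "i = k")
    case True
    thus ?thesis by (simp add: monotone_in_compress)
  next
    case False
    hence "monotone_in i (compress_upto f k)"
      using Suc by simp
    thus ?thesis
      using False by (simp add: monotone_in_compress_other)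
  qed
qed simp

theorem proposition3p4:
  fixes n :: nat and A B W :: "(nat \<Rightarrow> bool) set"
  assumes "is_partition3 n A B W"
  shows "\<exists>A' B' W'. is_partition3 n A' B' W'
           \<and> mu n A' = mu n A \<and> mu n B' = mu n B \<and> mu n W' = mu n W
           \<and> increasing n A' \<and> decreasing n B'
           \<and> (\<forall>i<n. card (edge_boundary i A B) \<ge> card (edge_boundary i A' B'))"
proof -
  define f :: "(nat \<Rightarrow> bool) \<Rightarrow> nat" where "f x = (if x \<in> A then 2 else if x \<in> B then 0 else 1)" for x
  define F where "F = compress_upto f n"
  let ?level = "\<lambda>g t. {x\<in>cube n. g x = t}"
  have levels: "A = ?level f 2" "B = ?level f 0" "W = ?level f 1"
    using assms by (auto simp: is_partition3_def f_def)
  have F_range: "F x = 0 \<or> F x = 1 \<or> F x = 2" for x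
    using compress_upto_in_range[of f n x] by (auto simp: F_def f_def)
  hence "cube n \<subseteq> ?level F 2 \<union> ?level F 0 \<union> ?level F 1"
    by blast
  hence partition: "is_partition3 n (?level F 2) (?level F 0) (?level F 1)"
    unfolding is_partition3_def by (intro conjI subset_antisym) auto
  have measures: "mu n (?level F t) = mu n (?level f t)" for t
    using card_compress_upto_preimage[of n n "\<lambda>v. v = t" f] by (simp add: mu_def F_def Int_absorb2)
  have mono: "monotone_in k F" if "k < n" for k
    using that by (simp add: F_def monotone_in_compress_upto)
  have "F x \<le> 2" for x
    using F_range[of x] by auto
  hence monotone_levels: "increasing n (?level F 2)" "decreasing n (?level F 0)"
    by (simp_all add: increasing_top_level[OF mono] decreasing_bottom_level[OF mono])
  have boundary: "card (edge_boundary i (?level F 2) (?level F 0))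
      \<le> card (edge_boundary i (?level f 2) (?level f 0))" if "i < n" for i
    using card_edges_compress_upto[OF order.refl that, of 0 f 2] that
    by (simp add: card_edge_boundary_levels F_def f_def)
  show ?thesis
    unfolding levels
    by (rule exI[of _ "?level F 2"], rule exI[of _ "?level F 0"], rule exI[of _ "?level F 1"])
      (use partition measures monotone_levels boundary in simp)
qed

end
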